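(* Let $T$ be a bounded subset of $\mathbb R^p$. Let $\mathbf B$ be an $n\times q$ random matrix with i.i.d. $\mathcal N(0,1)$ entries and let $\mathbf A=\mathbf B\mathbf C$, where $\mathbf C$ is a deterministic $q\times p$ matrix. Fix $\varepsilon\ge0$ and let $T_\varepsilon:=\{\mathbf u\in T:\ \frac1n\|\mathbf A\mathbf u\|_1\le\varepsilon\}$. Then $$\mathbb E\sup_{\mathbf u\in T_\varepsilon}\left(\mathbf u^T\mathbf C^T\mathbf C\mathbf u\right)^{1/2}\le\sqrt{\frac{2\pi}{n}}\ \mathbb E\sup_{\mathbf u\in T}|\langle\mathbf C^T\mathbf g,\mathbf u\rangle|+\sqrt{\frac\pi2}\,\varepsilon,$$ where $\mathbf g\sim\mathcal N(0,\mathbf I_q)$ is a standard Gaussian random vector in $\mathbb R^q$. *)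

theory Defs
  imports "HOL-Probability.Probability"
begin

definition l1norm :: "real ^ 'n \<Rightarrow> real" where
  "l1norm x = (\<Sum>i\<in>UNIV. \<bar>x $ i\<bar>)"

end

theory Submission
  imports Defs
begin

text \<open>
  Write \<open>v = C u\<close>. Averaging over an independent copy \<open>B'\<close> of \<open>B\<close> gives
  \<open>E (1/n) \<parallel>B' v\<parallel>\<^sub>1 = sqrt (2/pi) \<parallel>v\<parallel>\<close>, so on \<open>T\<^sub>\<epsilon>\<close> we have
  \<open>\<parallel>v\<parallel> \<le> sqrt (pi/2) (\<epsilon> + D v)\<close> with the deviation \<open>D v = sqrt (2/pi) \<parallel>v\<parallel> - (1/n) \<parallel>B v\<parallel>\<^sub>1\<close>,
  and it remains to show \<open>E sup D \<le> (2 / sqrt n) E sup \<langle>g, C u\<rangle>\<close>. Inserting the copy \<open>B'\<close>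
  (the maximum of averages is at most the average of the maximum) and exchanging rows of
  \<open>B\<close> and \<open>B'\<close> according to random signs \<open>\<sigma>\<^sub>i\<close> bounds \<open>E sup D\<close> by \<open>(2/n) E sup \<Sum>\<^sub>i \<sigma>\<^sub>i \<bar>\<langle>B\<^sub>i, v\<rangle>\<bar>\<close>;
  the contraction principle removes the absolute values, sign invariance removes the signs,
  and \<open>\<Sum>\<^sub>i B\<^sub>i / sqrt n\<close> is again a standard Gaussian vector. The suprema are reduced to
  finite maxima through a countable dense subset of \<open>C ` T\<close> and monotone convergence.
\<close>

section \<open>Standard Gaussian product measures\<close>

definition std_normal :: "real measure" where
  "std_normal = density lborel std_normal_density"

abbreviation std_gaussian :: "'i set \<Rightarrow> ('i \<Rightarrow> real) measure" where
  "std_gaussian I \<equiv> PiM I (\<lambda>_. std_normal)"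

lemma prob_space_std_normal [simp, intro]: "prob_space std_normal"
  unfolding std_normal_def by (rule prob_space_normal_density) simp

lemma sets_std_normal [simp, measurable_cong]: "sets std_normal = sets borel"
  unfolding std_normal_def by simp

lemma space_std_normal [simp]: "space std_normal = UNIV"
  unfolding std_normal_def by simp

lemma prob_space_std_gaussian [simp, intro]: "prob_space (std_gaussian I)"
  by (intro prob_space_PiM) simp

lemma distributed_std_normal_iff:
  assumes "X \<in> borel_measurable M"
  shows "distributed M lborel X std_normal_density \<longleftrightarrow> distr M std_normal X = std_normal"
proof -
  have "distr M std_normal X = distr M lborel X" by (rule distr_cong) auto
  then show ?thesis
    using assms unfolding distributed_def std_normal_def by auto
qed

lemma measurable_std_gaussian_coord [measurable]:
  "(\<lambda>w. w i) \<in> borel_measurable (std_gaussian I)"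
proof (cases "i \<in> I")
  case True
  then show ?thesis
    using measurable_component_singleton[OF True, of "\<lambda>_. std_normal"] by simp
next
  case False
  have "(\<lambda>w. w i) \<in> borel_measurable (std_gaussian I) \<longleftrightarrow> (\<lambda>w. undefined::real) \<in> borel_measurable (std_gaussian I)"
    by (rule measurable_cong) (use False in \<open>auto simp: space_PiM PiE_def extensional_def\<close>)
  then show ?thesis by simp
qed

lemma distributed_std_gaussian_coord:
  "i \<in> I \<Longrightarrow> distributed (std_gaussian I) lborel (\<lambda>w. w i) std_normal_density"
  by (subst distributed_std_normal_iff) (auto intro: distr_PiM_component)

lemma indep_vars_std_gaussian_coords:
  "prob_space.indep_vars (std_gaussian I) (\<lambda>_. borel) (\<lambda>i w. w i) I"
proof (cases "I = {}")
  case True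
  then show ?thesis
    unfolding prob_space.indep_vars_def[OF prob_space_std_gaussian] prob_space.indep_sets_def[OF prob_space_std_gaussian]
    by auto
next
  case False
  interpret P: prob_space "std_gaussian I" by simp
  have "distr (std_gaussian I) (PiM I (\<lambda>_. borel)) (\<lambda>x. \<lambda>i\<in>I. x i)
      = distr (std_gaussian I) (std_gaussian I) (\<lambda>x. x)"
    by (rule distr_cong)
       (auto intro!: sets_PiM_cong simp: space_PiM PiE_def extensional_def restrict_def fun_eq_iff)
  moreover have "PiM I (\<lambda>i. distr (std_gaussian I) borel (\<lambda>x. x i)) = std_gaussian I"
  proof (rule PiM_cong)
    fix i assume "i \<in> I"
    then show "distr (std_gaussian I) borel (\<lambda>x. x i) = std_normal"
      using distributed_std_gaussian_coord distributed_std_normal_iff measurable_std_gaussian_coord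
      by (metis distr_cong sets_std_normal)
  qed simp
  ultimately show ?thesis
    using P.indep_vars_iff_distr_eq_PiM[where I=I and M'="\<lambda>_. borel" and X="\<lambda>i w. w i"] False
    by simp
qed

lemma integrable_std_gaussian_coord [simp, intro]:
  "integrable (std_gaussian UNIV) (\<lambda>w. w k)"
proof -
  have "integrable lborel (\<lambda>x. std_normal_density x * x)"
    using integrable_std_normal_moment[of 1] by simp
  then show ?thesis
    using distributed_integrable[OF distributed_std_gaussian_coord[of k UNIV], of "\<lambda>x. x"] by simp
qed

lemma measurable_into_std_gaussian:
  assumes "\<And>i. X i \<in> borel_measurable M"
  shows "(\<lambda>x i. X i x) \<in> measurable M (std_gaussian UNIV)"
  using assms by (intro measurable_PiM_single') (auto simp: space_PiM)

lemma (in prob_space) distr_iid_std_normal: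
  assumes indep: "indep_vars (\<lambda>_. borel) X UNIV"
    and normal: "\<And>i. distributed M lborel (X i) std_normal_density"
  shows "distr M (std_gaussian UNIV) (\<lambda>x i. X i x) = std_gaussian UNIV"
proof -
  have X: "\<And>i. X i \<in> borel_measurable M"
    using normal unfolding distributed_def by simp
  have "distr M (std_gaussian UNIV) (\<lambda>x i. X i x) = distr M (PiM UNIV (\<lambda>_. borel)) (\<lambda>x. \<lambda>i\<in>UNIV. X i x)"
    by (rule distr_cong) (auto intro!: sets_PiM_cong)
  also have "\<dots> = PiM UNIV (\<lambda>i. distr M borel (X i))"
    using indep_vars_iff_distr_eq_PiM[where I=UNIV and M'="\<lambda>_. borel" and X=X] X indep by simp
  also have "\<dots> = std_gaussian UNIV"
  proof (rule PiM_cong)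
    fix i
    have "distr M borel (X i) = distr M std_normal (X i)" by (rule distr_cong) auto
    then show "distr M borel (X i) = std_normal"
      using normal[of i] distributed_std_normal_iff[OF X[of i]] by simp
  qed simp
  finally show ?thesis .
qed

lemma (in prob_space) nn_integral_iid_std_normal:
  assumes "indep_vars (\<lambda>_. borel) X UNIV"
    and "\<And>i. distributed M lborel (X i) std_normal_density"
    and "h \<in> borel_measurable (std_gaussian UNIV)"
  shows "(\<integral>\<^sup>+\<omega>. ennreal (h (\<lambda>i. X i \<omega>)) \<partial>M) = (\<integral>\<^sup>+z. ennreal (h z) \<partial>std_gaussian UNIV)"
proof -
  have X: "(\<lambda>x i. X i x) \<in> measurable M (std_gaussian UNIV)"
    using assms(2) by (intro measurable_into_std_gaussian) (simp add: distributed_def)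
  have "(\<integral>\<^sup>+z. ennreal (h z) \<partial>std_gaussian UNIV) = (\<integral>\<^sup>+z. ennreal (h z) \<partial>distr M (std_gaussian UNIV) (\<lambda>x i. X i x))"
    using assms(1,2) by (simp add: distr_iid_std_normal)
  also have "\<dots> = (\<integral>\<^sup>+\<omega>. ennreal (h (\<lambda>i. X i \<omega>)) \<partial>M)"
    by (rule nn_integral_distr[OF X]) (use assms(3) in measurable)
  finally show ?thesis ..
qed

lemma (in prob_space) integral_iid_std_normal:
  fixes h :: "('i \<Rightarrow> real) \<Rightarrow> real"
  assumes "indep_vars (\<lambda>_. borel) X UNIV"
    and "\<And>i. distributed M lborel (X i) std_normal_density"
    and "h \<in> borel_measurable (std_gaussian UNIV)"
  shows "(\<integral>\<omega>. h (\<lambda>i. X i \<omega>) \<partial>M) = (\<integral>z. h z \<partial>std_gaussian UNIV)"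
proof -
  have X: "(\<lambda>x i. X i x) \<in> measurable M (std_gaussian UNIV)"
    using assms(2) by (intro measurable_into_std_gaussian) (simp add: distributed_def)
  have "(\<integral>z. h z \<partial>std_gaussian UNIV) = (\<integral>z. h z \<partial>distr M (std_gaussian UNIV) (\<lambda>x i. X i x))"
    using assms(1,2) by (simp add: distr_iid_std_normal)
  also have "\<dots> = (\<integral>\<omega>. h (\<lambda>i. X i \<omega>) \<partial>M)"
    by (rule integral_distr[OF X assms(3)])
  finally show ?thesis ..
qed

lemma integral_std_gaussian_reindex:
  fixes f :: "'j \<Rightarrow> 'i" and h :: "('j \<Rightarrow> real) \<Rightarrow> real"
  assumes "inj f" and h: "h \<in> borel_measurable (std_gaussian UNIV)"
  shows "(\<integral>w. h w \<partial>std_gaussian UNIV) = (\<integral>w. h (\<lambda>k. w (f k)) \<partial>std_gaussian UNIV)"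
proof -
  let ?r = "\<lambda>w. \<lambda>k\<in>UNIV. w (f k)"
  have "distr (std_gaussian UNIV) (std_gaussian UNIV) ?r = std_gaussian UNIV"
    using distr_PiM_reindex[of UNIV "\<lambda>_. std_normal" f UNIV] assms by simp
  moreover have "?r \<in> measurable (std_gaussian UNIV) (std_gaussian UNIV)"
    by (intro measurable_restrict measurable_component_singleton) simp
  ultimately have "(\<integral>w. h w \<partial>std_gaussian UNIV) = (\<integral>w. h (?r w) \<partial>std_gaussian UNIV)"
    using integral_distr[OF _ h] by metis
  then show ?thesis by (simp add: restrict_def)
qed

lemma integral_std_gaussian_sign_flip:
  fixes \<sigma> :: "'i \<Rightarrow> real" and h :: "('i \<Rightarrow> real) \<Rightarrow> real"
  assumes \<sigma>: "\<And>k. \<bar>\<sigma> k\<bar> = 1" and h: "h \<in> borel_measurable (std_gaussian UNIV)"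
  shows "(\<integral>w. h (\<lambda>k. \<sigma> k * w k) \<partial>std_gaussian UNIV) = (\<integral>w. h w \<partial>std_gaussian UNIV)"
proof -
  interpret P: prob_space "std_gaussian UNIV" by simp
  have "P.indep_vars (\<lambda>_. borel) (\<lambda>k w. \<sigma> k * w k) UNIV"
    by (rule P.indep_vars_compose2[OF indep_vars_std_gaussian_coords]) auto
  moreover have "distributed (std_gaussian UNIV) lborel (\<lambda>w. \<sigma> k * w k) std_normal_density" for k
    using P.normal_density_affine[OF distributed_std_gaussian_coord[of k UNIV], of "\<sigma> k" 0] \<sigma>[of k]
    by (cases "\<sigma> k = 0") auto
  ultimately show ?thesis
    using P.integral_iid_std_normal h by blast
qed

lemma integral_std_gaussian_row_sums:
  fixes h :: "('q \<Rightarrow> real) \<Rightarrow> real"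
  assumes h: "h \<in> borel_measurable (std_gaussian UNIV)"
  shows "(\<integral>w. h (\<lambda>j. (\<Sum>i\<in>UNIV. w (i, j)) / sqrt (real CARD('n))) \<partial>std_gaussian (UNIV :: ('n::finite \<times> 'q) set))
       = (\<integral>z. h z \<partial>std_gaussian UNIV)"
proof -
  let ?P = "std_gaussian (UNIV :: ('n \<times> 'q) set)"
  let ?n = "real CARD('n)"
  interpret P: prob_space ?P by simp
  define K where "K j = range (\<lambda>i::'n. (i, j))" for j :: 'q
  define X where "X j w = (\<Sum>i\<in>UNIV. w (i, j)) / sqrt ?n" for j and w :: "'n \<times> 'q \<Rightarrow> real"
  have inj: "inj (\<lambda>i::'n. (i, j))" for j by (auto simp: inj_def)
  have sum_K: "(\<Sum>k\<in>K j. w k) = (\<Sum>i\<in>UNIV. w (i, j))" for j w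
    unfolding K_def by (subst sum.reindex[OF inj]) auto
  have "P.indep_vars (\<lambda>j. PiM (K j) (\<lambda>_. borel)) (\<lambda>j w. restrict w (K j)) UNIV"
    using P.indep_vars_restrict[OF indep_vars_std_gaussian_coords, of UNIV K]
    by (auto simp: K_def disjoint_family_on_def restrict_def)
  then have "P.indep_vars (\<lambda>_. borel) (\<lambda>j w. (\<Sum>k\<in>K j. restrict w (K j) k) / sqrt ?n) UNIV"
    by (rule P.indep_vars_compose2) auto
  then have indep: "P.indep_vars (\<lambda>_. borel) X UNIV"
    by (rule P.indep_vars_cong[THEN iffD1, rotated 3]) (auto simp: X_def sum_K fun_eq_iff)
  have "distributed ?P lborel (X j) std_normal_density" for j
  proof -
    have "distributed ?P lborel (\<lambda>w. \<Sum>k\<in>K j. w k) (normal_density (\<Sum>k\<in>K j. 0) (sqrt (\<Sum>k\<in>K j. 1\<^sup>2)))"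
      by (rule P.sum_indep_normal[OF _ _ P.indep_vars_subset[OF indep_vars_std_gaussian_coords]])
         (auto simp: K_def intro: distributed_std_gaussian_coord)
    moreover have "(\<Sum>k\<in>K j. (1::real)\<^sup>2) = ?n"
      using card_image[OF inj[of j]] by (simp add: K_def)
    ultimately have "distributed ?P lborel (\<lambda>w. \<Sum>i\<in>UNIV. w (i, j)) (normal_density 0 (sqrt ?n))"
      by (simp add: sum_K)
    from P.normal_density_affine[OF this, of "1 / sqrt ?n" 0] show ?thesis
      by (simp add: X_def[abs_def])
  qed
  then show ?thesis
    using P.integral_iid_std_normal[OF indep _ h] by (simp add: X_def)
qed

lemma (in prob_space) abs_normal_expectation:
  assumes Z: "distributed M lborel Z (normal_density 0 \<sigma>)" and \<sigma>: "0 < \<sigma>"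
  shows "integrable M (\<lambda>x. \<bar>Z x\<bar>)" and "(\<integral>x. \<bar>Z x\<bar> \<partial>M) = \<sigma> * sqrt (2 / pi)"
proof -
  have D: "distributed M lborel (\<lambda>x. Z x / \<sigma>) std_normal_density"
    using normal_standard_normal_convert[OF \<sigma>, of Z 0] Z by simp
  have "(\<integral>x. \<bar>Z x\<bar> \<partial>M) / \<sigma> = (\<integral>x. \<bar>Z x / \<sigma>\<bar> \<partial>M)"
    using \<sigma> by (simp add: abs_div)
  also have "\<dots> = (\<integral>x. std_normal_density x * \<bar>x\<bar> \<partial>lborel)"
    by (rule distributed_integral[OF D, symmetric]) auto
  also have "\<dots> = sqrt (2 / pi)"
    using integral_std_normal_moment_abs_odd[of 0] by simp
  finally show "(\<integral>x. \<bar>Z x\<bar> \<partial>M) = \<sigma> * sqrt (2 / pi)"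
    using \<sigma> by (simp add: field_simps)
  have "integrable lborel (\<lambda>x. std_normal_density x * \<bar>x\<bar>)"
    using integrable_std_normal_moment_abs[of 1] by simp
  then have "integrable M (\<lambda>x. \<sigma> * \<bar>Z x / \<sigma>\<bar>)"
    by (intro integrable_mult_right) (subst distributed_integrable[OF D, symmetric], auto)
  then show "integrable M (\<lambda>x. \<bar>Z x\<bar>)"
    using \<sigma> by (simp add: abs_div)
qed

lemma
  fixes k :: "'q::finite \<Rightarrow> 'i" and a :: "real ^ 'q"
  assumes k: "inj k" "range k \<subseteq> I"
  shows integrable_abs_std_gaussian_linear: "integrable (std_gaussian I) (\<lambda>w. \<bar>\<Sum>j\<in>UNIV. a $ j * w (k j)\<bar>)"
    and integral_abs_std_gaussian_linear:
      "(\<integral>w. \<bar>\<Sum>j\<in>UNIV. a $ j * w (k j)\<bar> \<partial>std_gaussian I) = norm a * sqrt (2 / pi)"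
proof -
  interpret P: prob_space "std_gaussian I" by simp
  have "integrable (std_gaussian I) (\<lambda>w. \<bar>\<Sum>j\<in>UNIV. a $ j * w (k j)\<bar>) \<and>
    (\<integral>w. \<bar>\<Sum>j\<in>UNIV. a $ j * w (k j)\<bar> \<partial>std_gaussian I) = norm a * sqrt (2 / pi)"
  proof (cases "a = 0")
    case True
    then show ?thesis by simp
  next
    case False
    \<comment> \<open>Only the nonzero coefficients give normal summands; index them by their image \<open>L\<close> under \<open>k\<close>.\<close>
    define L where "L = k ` {j. a $ j \<noteq> 0}"
    define c where "c i = a $ inv k i" for i
    have ck: "c (k j) = a $ j" for j using k by (simp add: c_def)
    have L: "L \<noteq> {}" "finite L" "L \<subseteq> I"
      using False k by (auto simp: L_def vec_eq_iff)
    have c_nz: "i \<in> L \<Longrightarrow> c i \<noteq> 0" for i by (auto simp: L_def ck)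
    have reindex: "(\<Sum>j\<in>UNIV. f (a $ j) (k j)) = (\<Sum>i\<in>L. f (c i) i)" if "\<And>i. f 0 i = 0" for f
    proof -
      have "(\<Sum>j\<in>UNIV. f (a $ j) (k j)) = (\<Sum>j\<in>{j. a $ j \<noteq> 0}. f (a $ j) (k j))"
        by (rule sum.mono_neutral_right) (auto simp: that)
      also have "\<dots> = (\<Sum>i\<in>L. f (c i) i)"
        unfolding L_def using k by (subst sum.reindex) (auto simp: ck intro: inj_on_subset)
      finally show ?thesis .
    qed
    have "P.indep_vars (\<lambda>_. borel) (\<lambda>i w. c i * w i) L"
      by (rule P.indep_vars_compose2[OF P.indep_vars_subset[OF indep_vars_std_gaussian_coords L(3)]]) auto
    moreover have "distributed (std_gaussian I) lborel (\<lambda>w. c i * w i) (normal_density 0 \<bar>c i\<bar>)"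
      if "i \<in> L" for i
      using P.normal_density_affine[OF distributed_std_gaussian_coord[of i I], of "c i" 0] that L c_nz by auto
    ultimately have "distributed (std_gaussian I) lborel (\<lambda>w. \<Sum>i\<in>L. c i * w i)
         (normal_density (\<Sum>i\<in>L. 0) (sqrt (\<Sum>i\<in>L. \<bar>c i\<bar>\<^sup>2)))"
      using c_nz by (intro P.sum_indep_normal L) auto
    moreover have "sqrt (\<Sum>i\<in>L. \<bar>c i\<bar>\<^sup>2) = norm a"
      using reindex[of "\<lambda>x _. x\<^sup>2"] by (simp add: norm_vec_def L2_set_def)
    ultimately have "distributed (std_gaussian I) lborel (\<lambda>w. \<Sum>i\<in>L. c i * w i) (normal_density 0 (norm a))"
      by simp
    moreover have "(\<Sum>j\<in>UNIV. a $ j * w (k j)) = (\<Sum>i\<in>L. c i * w i)" for w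
      using reindex[of "\<lambda>x i. x * w i"] by simp
    ultimately show ?thesis
      using P.abs_normal_expectation False by simp
  qed
  then show "integrable (std_gaussian I) (\<lambda>w. \<bar>\<Sum>j\<in>UNIV. a $ j * w (k j)\<bar>)"
    and "(\<integral>w. \<bar>\<Sum>j\<in>UNIV. a $ j * w (k j)\<bar> \<partial>std_gaussian I) = norm a * sqrt (2 / pi)"
    by auto
qed

lemma (in product_sigma_finite) product_integral_mono_fibrewise:
  fixes f g :: "_ \<Rightarrow> real"
  assumes IJ: "I \<inter> J = {}" "finite I" "finite J"
    and f: "integrable (PiM (I \<union> J) M) f" and g: "integrable (PiM (I \<union> J) M) g"
    and le: "\<And>x. x \<in> space (PiM I M) \<Longrightarrow>
       (\<integral>y. g (merge I J (x, y)) \<partial>PiM J M) \<le> (\<integral>y. f (merge I J (x, y)) \<partial>PiM J M)"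
  shows "integral\<^sup>L (PiM (I \<union> J) M) g \<le> integral\<^sup>L (PiM (I \<union> J) M) f"
proof -
  interpret I: finite_product_sigma_finite M I by standard fact
  interpret J: finite_product_sigma_finite M J by standard fact
  interpret P: pair_sigma_finite "PiM I M" "PiM J M" ..
  have merged: "integrable (PiM I M \<Otimes>\<^sub>M PiM J M) (\<lambda>p. h (merge I J p))"
    if "integrable (PiM (I \<union> J) M) h" for h :: "_ \<Rightarrow> real"
    by (rule integrable_distr[OF measurable_merge]) (simp add: distr_merge[OF IJ] that)
  show ?thesis
    unfolding product_integral_fold[OF IJ f] product_integral_fold[OF IJ g]
    by (rule integral_mono[OF P.integrable_fst'[OF merged[OF g]] P.integrable_fst'[OF merged[OF f]] le])
qed

section \<open>Finite maxima and the contraction principle\<close>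

lemma integrable_Max_image:
  fixes f :: "'v \<Rightarrow> 'a \<Rightarrow> real"
  assumes "finite F" "F \<noteq> {}" "\<And>v. v \<in> F \<Longrightarrow> integrable M (f v)"
  shows "integrable M (\<lambda>x. Max ((\<lambda>v. f v x) ` F))"
  using assms
proof (induction F rule: finite_ne_induct)
  case (insert v F)
  have "(\<lambda>x. Max ((\<lambda>v. f v x) ` insert v F)) = (\<lambda>x. max (f v x) (Max ((\<lambda>v. f v x) ` F)))"
    using insert by (auto simp: fun_eq_iff)
  then show ?case using insert by simp
qed simp

lemma Max_image_add_le:
  fixes f g :: "'v \<Rightarrow> real"
  assumes "finite F" "F \<noteq> {}"
  shows "Max ((\<lambda>v. f v + g v) ` F) \<le> Max (f ` F) + Max (g ` F)"
  using assms by (auto intro!: add_mono Max_ge)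

lemma Max_image_cmult:
  fixes f :: "'v \<Rightarrow> real"
  assumes "finite F" "F \<noteq> {}" "0 \<le> c"
  shows "Max ((\<lambda>v. c * f v) ` F) = c * Max (f ` F)"
proof -
  have "mono ((*) c)" using assms by (auto intro: monoI mult_left_mono)
  then have "c * Max (f ` F) = Max ((*) c ` f ` F)"
    using assms by (intro mono_Max_commute) auto
  then show ?thesis by (simp add: image_image)
qed

lemma (in prob_space) Max_integral_le_integral_Max:
  fixes f :: "'v \<Rightarrow> 'a \<Rightarrow> real"
  assumes F: "finite F" "F \<noteq> {}" and f: "\<And>v. v \<in> F \<Longrightarrow> integrable M (f v)"
  shows "Max ((\<lambda>v. \<integral>x. f v x \<partial>M) ` F) \<le> (\<integral>x. Max ((\<lambda>v. f v x) ` F) \<partial>M)"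
  using F f integrable_Max_image[OF F f] by (auto intro!: integral_mono Max_ge)

definition rademacher :: "bool \<Rightarrow> real" where
  "rademacher b = (if b then -1 else 1)"

lemma Max_abs_contraction_step:
  fixes R t :: "'v \<Rightarrow> real"
  assumes F: "finite F" "F \<noteq> {}"
  shows "Max ((\<lambda>v. R v + \<bar>t v\<bar>) ` F) + Max ((\<lambda>v. R v - \<bar>t v\<bar>) ` F)
      \<le> Max ((\<lambda>v. R v + t v) ` F) + Max ((\<lambda>v. R v - t v) ` F)"
proof -
  obtain v1 where v1: "v1 \<in> F" "Max ((\<lambda>v. R v + \<bar>t v\<bar>) ` F) = R v1 + \<bar>t v1\<bar>"
  proof -
    have "Max ((\<lambda>v. R v + \<bar>t v\<bar>) ` F) \<in> (\<lambda>v. R v + \<bar>t v\<bar>) ` F" using F by (intro Max_in) auto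
    then show ?thesis using that by auto
  qed
  obtain v2 where v2: "v2 \<in> F" "Max ((\<lambda>v. R v - \<bar>t v\<bar>) ` F) = R v2 - \<bar>t v2\<bar>"
  proof -
    have "Max ((\<lambda>v. R v - \<bar>t v\<bar>) ` F) \<in> (\<lambda>v. R v - \<bar>t v\<bar>) ` F" using F by (intro Max_in) auto
    then show ?thesis using that by auto
  qed
  have a1: "R v1 + t v1 \<le> Max ((\<lambda>v. R v + t v) ` F)" "R v2 + t v2 \<le> Max ((\<lambda>v. R v + t v) ` F)"
    using v1 v2 F by (auto intro!: Max_ge)
  have a2: "R v1 - t v1 \<le> Max ((\<lambda>v. R v - t v) ` F)" "R v2 - t v2 \<le> Max ((\<lambda>v. R v - t v) ` F)"
    using v1 v2 F by (auto intro!: Max_ge)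
  \<comment> \<open>Evaluate the right-hand maxima at the maximisers \<open>v1\<close>, \<open>v2\<close> of the left, paired by the sign of \<open>t v1 - t v2\<close>.\<close>
  have "\<bar>t v1\<bar> - \<bar>t v2\<bar> \<le> t v1 - t v2 \<or> \<bar>t v1\<bar> - \<bar>t v2\<bar> \<le> t v2 - t v1" by linarith
  then show ?thesis using v1 v2 a1 a2 by linarith
qed

lemma sum_fun_upd_bool_split:
  fixes H :: "('n::finite \<Rightarrow> bool) \<Rightarrow> real"
  shows "(\<Sum>s\<in>UNIV. H s) = (\<Sum>s\<in>UNIV. H (s(i0 := True)) + H (s(i0 := False))) / 2"
proof -
  define fl where "fl s = s(i0 := \<not> s i0)" for s :: "'n \<Rightarrow> bool"
  have fl: "fl (fl s) = s" for s by (auto simp: fl_def fun_eq_iff)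
  have "(\<Sum>s\<in>UNIV. H s) = (\<Sum>s\<in>UNIV. H (fl s))"
    by (rule sum.reindex_bij_witness[of _ fl fl]) (auto simp: fl)
  then have "2 * (\<Sum>s\<in>UNIV. H s) = (\<Sum>s\<in>UNIV. H s + H (fl s))"
    by (simp add: sum.distrib)
  also have "\<dots> = (\<Sum>s\<in>UNIV. H (s(i0 := True)) + H (s(i0 := False)))"
  proof (rule sum.cong[OF refl])
    fix s
    show "H s + H (fl s) = H (s(i0 := True)) + H (s(i0 := False))"
    proof (cases "s i0")
      case True
      then have "s(i0 := True) = s" "fl s = s(i0 := False)" by (auto simp: fl_def fun_eq_iff)
      then show ?thesis by simp
    next
      case False
      then have "s(i0 := False) = s" "fl s = s(i0 := True)" by (auto simp: fl_def fun_eq_iff)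
      then show ?thesis by simp
    qed
  qed
  finally show ?thesis by simp
qed

lemma sum_Max_rademacher_partial_abs_le:
  fixes a :: "'n::finite \<Rightarrow> 'v \<Rightarrow> real"
  assumes F: "finite F" "F \<noteq> {}"
  shows "(\<Sum>s\<in>UNIV. Max ((\<lambda>v. \<Sum>i\<in>UNIV. rademacher (s i) * (if i \<in> A then \<bar>a i v\<bar> else a i v)) ` F))
       \<le> (\<Sum>s\<in>UNIV. Max ((\<lambda>v. \<Sum>i\<in>UNIV. rademacher (s i) * a i v) ` F))"
proof -
  \<comment> \<open>Put absolute values on one coordinate \<open>i0\<close> at a time; pairing the sign patterns that differ
     only at \<open>i0\<close> reduces each step to \<open>Max_abs_contraction_step\<close>.\<close>
  have "finite A" by simp
  then show ?thesis
  proof (induction A rule: finite_induct)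
    case empty then show ?case by simp
  next
    case (insert i0 A)
    define phi where "phi B i v = (if i \<in> B then \<bar>a i v\<bar> else a i v)" for B i v
    define G where "G B s = Max ((\<lambda>v. \<Sum>i\<in>UNIV. rademacher (s i) * phi B i v) ` F)" for B s
    define R where "R s v = (\<Sum>i\<in>UNIV - {i0}. rademacher (s i) * phi A i v)" for s v
    have split: "(\<Sum>i\<in>UNIV. rademacher ((s(i0 := b)) i) * phi B i v) = rademacher b * phi B i0 v + R s v"
      if "B = A \<or> B = insert i0 A" for s b B v
    proof -
      have "(\<Sum>i\<in>UNIV. rademacher ((s(i0 := b)) i) * phi B i v) = rademacher b * phi B i0 v + (\<Sum>i\<in>UNIV - {i0}. rademacher ((s(i0 := b)) i) * phi B i v)"
        by (subst sum.remove[of _ i0]) auto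
      also have "(\<Sum>i\<in>UNIV - {i0}. rademacher ((s(i0 := b)) i) * phi B i v) = R s v"
        unfolding R_def using that by (intro sum.cong) (auto simp: phi_def)
      finally show ?thesis .
    qed
    have step: "G (insert i0 A) (s(i0 := True)) + G (insert i0 A) (s(i0 := False))
        \<le> G A (s(i0 := True)) + G A (s(i0 := False))" for s
    proof -
      have e1: "G (insert i0 A) (s(i0 := False)) = Max ((\<lambda>v. R s v + \<bar>a i0 v\<bar>) ` F)"
        unfolding G_def using split[of "insert i0 A" s False] by (simp add: phi_def rademacher_def add.commute)
      have e2: "G (insert i0 A) (s(i0 := True)) = Max ((\<lambda>v. R s v - \<bar>a i0 v\<bar>) ` F)"
        unfolding G_def using split[of "insert i0 A" s True] by (simp add: phi_def rademacher_def)
      have e3: "G A (s(i0 := False)) = Max ((\<lambda>v. R s v + a i0 v) ` F)"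
        unfolding G_def using split[of A s False] insert.hyps by (simp add: phi_def rademacher_def add.commute)
      have e4: "G A (s(i0 := True)) = Max ((\<lambda>v. R s v - a i0 v) ` F)"
        unfolding G_def using split[of A s True] insert.hyps by (simp add: phi_def rademacher_def)
      show ?thesis using Max_abs_contraction_step[OF F, of "R s" "a i0"] e1 e2 e3 e4 by linarith
    qed
    have "(\<Sum>s\<in>UNIV. G (insert i0 A) s) \<le> (\<Sum>s\<in>UNIV. G A s)"
      using sum_fun_upd_bool_split[of "G (insert i0 A)" i0] sum_fun_upd_bool_split[of "G A" i0]
        sum_mono[of UNIV "\<lambda>s. G (insert i0 A) (s(i0 := True)) + G (insert i0 A) (s(i0 := False))"
          "\<lambda>s. G A (s(i0 := True)) + G A (s(i0 := False))"] step
      by simp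
    then show ?case using insert.IH unfolding G_def phi_def by linarith
  qed
qed

lemma sum_Max_rademacher_abs_le:
  fixes a :: "'n::finite \<Rightarrow> 'v \<Rightarrow> real"
  assumes F: "finite F" "F \<noteq> {}"
  shows "(\<Sum>s\<in>UNIV. Max ((\<lambda>v. \<Sum>i\<in>UNIV. rademacher (s i) * \<bar>a i v\<bar>) ` F))
       \<le> (\<Sum>s\<in>UNIV. Max ((\<lambda>v. \<Sum>i\<in>UNIV. rademacher (s i) * a i v) ` F))"
  using sum_Max_rademacher_partial_abs_le[OF F, of UNIV a] by simp

section \<open>Two independent Gaussian matrices\<close>

text \<open>A point \<open>w\<close> of \<open>std_gaussian UNIV\<close> on \<open>('n \<times> 'q) \<times> bool\<close> is a pair of independent
  standard Gaussian \<open>'n \<times> 'q\<close> matrices \<open>w (_, False)\<close> and \<open>w (_, True)\<close>;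
  \<open>gauss_row w b i v\<close> is the inner product of row \<open>i\<close> of matrix \<open>b\<close> with \<open>v\<close>.\<close>

definition gauss_row :: "(('n \<times> 'q) \<times> bool \<Rightarrow> real) \<Rightarrow> bool \<Rightarrow> 'n \<Rightarrow> real ^ 'q \<Rightarrow> real" where
  "gauss_row w b i v = (\<Sum>j\<in>UNIV. v $ j * w ((i, j), b))"

lemma integrable_gauss_row [simp, intro]:
  "integrable (std_gaussian UNIV) (\<lambda>w. gauss_row w b i v)"
  unfolding gauss_row_def by (intro Bochner_Integration.integrable_sum integrable_mult_right) simp

lemma
  fixes v :: "real ^ 'q::finite" and i :: 'n
  shows integrable_abs_gauss_row:
      "integrable (std_gaussian {k :: ('n \<times> 'q) \<times> bool. snd k}) (\<lambda>y. \<bar>gauss_row y True i v\<bar>)"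
    and integral_abs_gauss_row:
      "(\<integral>y. \<bar>gauss_row y True i v\<bar> \<partial>std_gaussian {k :: ('n \<times> 'q) \<times> bool. snd k}) = norm v * sqrt (2 / pi)"
proof -
  have "inj (\<lambda>j. ((i, j), True))" "range (\<lambda>j. ((i, j), True)) \<subseteq> {k :: ('n \<times> 'q) \<times> bool. snd k}"
    by (auto simp: inj_def)
  then show "integrable (std_gaussian {k :: ('n \<times> 'q) \<times> bool. snd k}) (\<lambda>y. \<bar>gauss_row y True i v\<bar>)"
    "(\<integral>y. \<bar>gauss_row y True i v\<bar> \<partial>std_gaussian {k :: ('n \<times> 'q) \<times> bool. snd k}) = norm v * sqrt (2 / pi)"
    unfolding gauss_row_def by (rule integrable_abs_std_gaussian_linear integral_abs_std_gaussian_linear)+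
qed

lemma integral_Max_norm_minus_gauss_row_le:
  fixes F :: "(real ^ 'q::finite) set"
  assumes F: "finite F" "F \<noteq> {}"
  shows "(\<integral>w. Max ((\<lambda>v. sqrt (2 / pi) * norm v - (\<Sum>i\<in>UNIV. \<bar>gauss_row w False i v\<bar>) / real CARD('n)) ` F)
            \<partial>std_gaussian (UNIV :: (('n::finite \<times> 'q) \<times> bool) set))
       \<le> (\<integral>w. Max ((\<lambda>v. \<Sum>i\<in>UNIV. \<bar>gauss_row w True i v\<bar> - \<bar>gauss_row w False i v\<bar>) ` F)
            \<partial>std_gaussian (UNIV :: (('n \<times> 'q) \<times> bool) set)) / real CARD('n)"
proof -
  let ?n = "real CARD('n)"
  define I where "I = {k :: ('n \<times> 'q) \<times> bool. \<not> snd k}"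
  define J where "J = {k :: ('n \<times> 'q) \<times> bool. snd k}"
  have IJ: "I \<union> J = UNIV" "I \<inter> J = {}" "finite I" "finite J" by (auto simp: I_def J_def)
  define g where "g w = Max ((\<lambda>v. sqrt (2 / pi) * norm v - (\<Sum>i\<in>UNIV. \<bar>gauss_row w False i v\<bar>) / ?n) ` F)"
    for w :: "('n \<times> 'q) \<times> bool \<Rightarrow> real"
  define f where "f w = Max ((\<lambda>v. (\<Sum>i\<in>UNIV. \<bar>gauss_row w True i v\<bar> - \<bar>gauss_row w False i v\<bar>) / ?n) ` F)"
    for w :: "('n \<times> 'q) \<times> bool \<Rightarrow> real"
  interpret G: product_sigma_finite "\<lambda>_ :: ('n \<times> 'q) \<times> bool. std_normal"
    by (simp add: product_sigma_finite_def prob_space_imp_sigma_finite)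
  interpret PJ: prob_space "std_gaussian J" by simp
  interpret PU: prob_space "std_gaussian (UNIV :: (('n \<times> 'q) \<times> bool) set)" by simp
  \<comment> \<open>Averaging over the second matrix turns \<open>sqrt (2 / pi) * norm v\<close> into \<open>\<bar>gauss_row w True i v\<bar>\<close>; then
     the maximum of averages is at most the average of the maximum.\<close>
  have "integral\<^sup>L (std_gaussian (I \<union> J)) g \<le> integral\<^sup>L (std_gaussian (I \<union> J)) f"
  proof (rule G.product_integral_mono_fibrewise[OF IJ(2-4)])
    show "integrable (std_gaussian (I \<union> J)) f" "integrable (std_gaussian (I \<union> J)) g"
      unfolding f_def g_def IJ(1)
      by (intro integrable_Max_image F integrable_diff integrable_divide Bochner_Integration.integrable_sum
          integrable_abs integrable_gauss_row PU.integrable_const; simp)+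
    fix x
    have merge: "gauss_row (merge I J (x, y)) b i v = (if b then gauss_row y b i v else gauss_row x b i v)"
      for y b i v by (simp add: gauss_row_def merge_def I_def J_def)
    have Y: "integrable (std_gaussian J) (\<lambda>y. \<bar>gauss_row y True i v\<bar>)"
      "(\<integral>y. \<bar>gauss_row y True i v\<bar> \<partial>std_gaussian J) = norm v * sqrt (2 / pi)" for i v
      unfolding J_def by (rule integrable_abs_gauss_row integral_abs_gauss_row)+
    have "(\<integral>y. g (merge I J (x, y)) \<partial>std_gaussian J)
        = Max ((\<lambda>v. \<integral>y. (\<Sum>i\<in>UNIV. \<bar>gauss_row y True i v\<bar> - \<bar>gauss_row x False i v\<bar>) / ?n
                   \<partial>std_gaussian J) ` F)"
      using Y by (simp add: g_def merge PJ.prob_space Bochner_Integration.integral_sum integral_diff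
          sum_subtractf diff_divide_distrib mult.commute)
    also have "\<dots> \<le> (\<integral>y. Max ((\<lambda>v. (\<Sum>i\<in>UNIV. \<bar>gauss_row y True i v\<bar> - \<bar>gauss_row x False i v\<bar>) / ?n) ` F)
        \<partial>std_gaussian J)"
      by (intro PJ.Max_integral_le_integral_Max F integrable_divide Bochner_Integration.integrable_sum)
         (auto intro!: Y(1) PJ.integrable_const)
    also have "\<dots> = (\<integral>y. f (merge I J (x, y)) \<partial>std_gaussian J)"
      by (simp add: f_def merge)
    finally show "(\<integral>y. g (merge I J (x, y)) \<partial>std_gaussian J) \<le> (\<integral>y. f (merge I J (x, y)) \<partial>std_gaussian J)" .
  qed
  moreover have "integral\<^sup>L (std_gaussian UNIV) f
      = (\<integral>w. Max ((\<lambda>v. \<Sum>i\<in>UNIV. \<bar>gauss_row w True i v\<bar> - \<bar>gauss_row w False i v\<bar>) ` F)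
            \<partial>std_gaussian (UNIV :: (('n \<times> 'q) \<times> bool) set)) / ?n"
    using Max_image_cmult[OF F, of "1 / ?n"] by (simp add: f_def[abs_def])
  ultimately show ?thesis
    by (simp add: IJ(1) g_def[abs_def])
qed

definition swap_rows :: "('n \<Rightarrow> bool) \<Rightarrow> ('n \<times> 'q) \<times> bool \<Rightarrow> ('n \<times> 'q) \<times> bool" where
  "swap_rows s k = (fst k, snd k \<noteq> s (fst (fst k)))"

lemma inj_swap_rows: "inj (swap_rows s)"
  by (auto simp: inj_def swap_rows_def prod_eq_iff)

lemma gauss_row_swap_rows:
  "gauss_row (\<lambda>k. w (swap_rows s k)) b i v = gauss_row w (b \<noteq> s i) i v"
  by (simp add: gauss_row_def swap_rows_def)

lemma rademacher_Not [simp]: "rademacher (\<not> b) = - rademacher b"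
  by (simp add: rademacher_def)

lemma integral_Max_gauss_row_abs_diff_le:
  fixes F :: "(real ^ 'q::finite) set"
  assumes F: "finite F" "F \<noteq> {}"
  defines "\<Omega> \<equiv> std_gaussian (UNIV :: (('n::finite \<times> 'q) \<times> bool) set)"
  shows "real (card (UNIV :: ('n \<Rightarrow> bool) set)) *
           (\<integral>w. Max ((\<lambda>v. \<Sum>i\<in>UNIV. \<bar>gauss_row w True i v\<bar> - \<bar>gauss_row w False i v\<bar>) ` F) \<partial>\<Omega>)
       \<le> 2 * (\<Sum>s\<in>UNIV. \<integral>w. Max ((\<lambda>v. \<Sum>i\<in>UNIV. rademacher (s i) * \<bar>gauss_row w False i v\<bar>) ` F) \<partial>\<Omega>)"
proof -
  define H where "H s w = Max ((\<lambda>v. \<Sum>i\<in>UNIV. rademacher (s i) * (\<bar>gauss_row w True i v\<bar> - \<bar>gauss_row w False i v\<bar>)) ` F)"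
    for s :: "'n \<Rightarrow> bool" and w
  define A where "A b s w = Max ((\<lambda>v. \<Sum>i\<in>UNIV. rademacher (s i) * \<bar>gauss_row w b i v\<bar>) ` F)"
    for b and s :: "'n \<Rightarrow> bool" and w
  have int_H: "integrable \<Omega> (H s)" and int_A: "integrable \<Omega> (A b s)" for b s
    unfolding H_def A_def \<Omega>_def
    using F by (auto intro!: integrable_Max_image integrable_diff integrable_mult_right
        Bochner_Integration.integrable_sum integrable_abs)
  \<comment> \<open>Swapping row \<open>i\<close> of the two matrices for every \<open>i\<close> with \<open>s i\<close> preserves the Gaussian measure.\<close>
  have swap: "(\<integral>w. f w \<partial>\<Omega>) = (\<integral>w. f (\<lambda>k. w (swap_rows s k)) \<partial>\<Omega>)" if "integrable \<Omega> f" for s and f :: "_ \<Rightarrow> real"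
    unfolding \<Omega>_def by (rule integral_std_gaussian_reindex[OF inj_swap_rows borel_measurable_integrable])
      (use that in \<open>simp add: \<Omega>_def\<close>)
  have "H (\<lambda>_. False) (\<lambda>k. w (swap_rows s k)) = H s w" for s w
  proof -
    have "\<bar>gauss_row w (\<not> s i) i v\<bar> - \<bar>gauss_row w (s i) i v\<bar>
        = rademacher (s i) * (\<bar>gauss_row w True i v\<bar> - \<bar>gauss_row w False i v\<bar>)" for i v
      by (cases "s i") (simp_all add: rademacher_def)
    then show ?thesis
      by (simp add: H_def gauss_row_swap_rows rademacher_def)
  qed
  then have H_swap: "(\<integral>w. H (\<lambda>_. False) w \<partial>\<Omega>) = (\<integral>w. H s w \<partial>\<Omega>)" for s
    by (simp add: swap[where s=s, OF int_H[of "\<lambda>_. False"]])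
  have A_swap: "(\<integral>w. A True s w \<partial>\<Omega>) = (\<integral>w. A False s w \<partial>\<Omega>)" for s
    by (subst swap[where s="\<lambda>_. True", OF int_A[of True s]]) (simp add: A_def[abs_def] gauss_row_swap_rows)
  have H_split: "H s w \<le> A True s w + A False (Not \<circ> s) w" for s w
    using Max_image_add_le[OF F, of "\<lambda>v. \<Sum>i\<in>UNIV. rademacher (s i) * \<bar>gauss_row w True i v\<bar>"
        "\<lambda>v. \<Sum>i\<in>UNIV. - rademacher (s i) * \<bar>gauss_row w False i v\<bar>"]
    by (simp add: H_def A_def right_diff_distrib sum_subtractf sum_negf)
  have flip: "(\<Sum>s\<in>UNIV. f (Not \<circ> s)) = (\<Sum>s\<in>UNIV. f s)" for f :: "('n \<Rightarrow> bool) \<Rightarrow> real"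
    by (rule sum.reindex_bij_witness[of _ "\<lambda>s. Not \<circ> s" "\<lambda>s. Not \<circ> s"]) (auto simp: fun_eq_iff)
  have "real (card (UNIV :: ('n \<Rightarrow> bool) set)) * (\<integral>w. H (\<lambda>_. False) w \<partial>\<Omega>) = (\<Sum>s\<in>UNIV. \<integral>w. H s w \<partial>\<Omega>)"
    by (subst sum.cong[OF refl H_swap[symmetric]]) (simp only: sum_constant)
  also have "\<dots> \<le> (\<Sum>s\<in>UNIV. (\<integral>w. A True s w \<partial>\<Omega>) + (\<integral>w. A False (Not \<circ> s) w \<partial>\<Omega>))"
  proof (rule sum_mono)
    fix s
    have "(\<integral>w. H s w \<partial>\<Omega>) \<le> (\<integral>w. A True s w + A False (Not \<circ> s) w \<partial>\<Omega>)"
      by (intro integral_mono int_H Bochner_Integration.integrable_add int_A H_split)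
    then show "(\<integral>w. H s w \<partial>\<Omega>) \<le> (\<integral>w. A True s w \<partial>\<Omega>) + (\<integral>w. A False (Not \<circ> s) w \<partial>\<Omega>)"
      by (simp add: Bochner_Integration.integral_add int_A)
  qed
  also have "\<dots> = 2 * (\<Sum>s\<in>UNIV. \<integral>w. A False s w \<partial>\<Omega>)"
    by (simp add: sum.distrib A_swap flip[of "\<lambda>s. \<integral>w. A False s w \<partial>\<Omega>"])
  also have "H (\<lambda>_. False) = (\<lambda>w. Max ((\<lambda>v. \<Sum>i\<in>UNIV. \<bar>gauss_row w True i v\<bar> - \<bar>gauss_row w False i v\<bar>) ` F))"
    by (simp add: H_def rademacher_def fun_eq_iff)
  finally show ?thesis
    by (simp only: A_def)
qed

lemma sum_integral_Max_rademacher_abs_le: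
  fixes F :: "(real ^ 'q::finite) set"
  assumes F: "finite F" "F \<noteq> {}"
  defines "\<Omega> \<equiv> std_gaussian (UNIV :: (('n::finite \<times> 'q) \<times> bool) set)"
  shows "(\<Sum>s\<in>UNIV. \<integral>w. Max ((\<lambda>v. \<Sum>i\<in>UNIV. rademacher (s i) * \<bar>gauss_row w False i v\<bar>) ` F) \<partial>\<Omega>)
       \<le> real (card (UNIV :: ('n \<Rightarrow> bool) set)) * (\<integral>w. Max ((\<lambda>v. \<Sum>i\<in>UNIV. gauss_row w False i v) ` F) \<partial>\<Omega>)"
proof -
  define A where "A s w = Max ((\<lambda>v. \<Sum>i\<in>UNIV. rademacher (s i) * \<bar>gauss_row w False i v\<bar>) ` F)"
    for s :: "'n \<Rightarrow> bool" and w
  define C where "C s w = Max ((\<lambda>v. \<Sum>i\<in>UNIV. rademacher (s i) * gauss_row w False i v) ` F)"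
    for s :: "'n \<Rightarrow> bool" and w
  have int_A: "integrable \<Omega> (A s)" and int_C: "integrable \<Omega> (C s)" for s
    unfolding A_def C_def \<Omega>_def
    using F by (auto intro!: integrable_Max_image integrable_mult_right Bochner_Integration.integrable_sum)
  \<comment> \<open>Multiplying row \<open>i\<close> by the sign \<open>rademacher (s i)\<close> preserves the Gaussian measure.\<close>
  have C_flip: "(\<integral>w. C s w \<partial>\<Omega>) = (\<integral>w. C (\<lambda>_. False) w \<partial>\<Omega>)" for s
  proof -
    define \<sigma> where "\<sigma> k = rademacher (s (fst (fst k)))" for k :: "('n \<times> 'q) \<times> bool"
    have "gauss_row (\<lambda>k. \<sigma> k * w k) False i v = rademacher (s i) * gauss_row w False i v" for w i v
      by (simp add: gauss_row_def \<sigma>_def sum_distrib_left mult.left_commute)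
    then have "C (\<lambda>_. False) (\<lambda>k. \<sigma> k * w k) = C s w" for w
      by (simp add: C_def rademacher_def)
    moreover have "\<bar>\<sigma> k\<bar> = 1" for k
      by (simp add: \<sigma>_def rademacher_def)
    ultimately show ?thesis
      using integral_std_gaussian_sign_flip[of \<sigma> "C (\<lambda>_. False)"] borel_measurable_integrable[OF int_C]
      by (simp add: \<Omega>_def)
  qed
  have "(\<Sum>s\<in>UNIV. \<integral>w. A s w \<partial>\<Omega>) = (\<integral>w. (\<Sum>s\<in>UNIV. A s w) \<partial>\<Omega>)"
    by (simp add: Bochner_Integration.integral_sum int_A)
  also have "\<dots> \<le> (\<integral>w. (\<Sum>s\<in>UNIV. C s w) \<partial>\<Omega>)"
    by (intro integral_mono Bochner_Integration.integrable_sum int_A int_C)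
       (unfold A_def C_def, rule sum_Max_rademacher_abs_le[OF F])
  also have "\<dots> = (\<Sum>s\<in>UNIV. \<integral>w. C s w \<partial>\<Omega>)"
    by (simp add: Bochner_Integration.integral_sum int_C)
  also have "\<dots> = (\<Sum>s\<in>(UNIV :: ('n \<Rightarrow> bool) set). \<integral>w. C (\<lambda>_. False) w \<partial>\<Omega>)"
    by (intro sum.cong refl C_flip)
  finally show ?thesis
    by (simp add: A_def C_def rademacher_def)
qed

lemma integral_Max_gauss_row_sum:
  fixes F :: "(real ^ 'q::finite) set"
  assumes F: "finite F" "F \<noteq> {}"
  shows "(\<integral>w. Max ((\<lambda>v. \<Sum>i\<in>UNIV. gauss_row w False i v) ` F) \<partial>std_gaussian (UNIV :: (('n::finite \<times> 'q) \<times> bool) set))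
       = sqrt (real CARD('n)) * (\<integral>z. Max ((\<lambda>v. \<Sum>j\<in>UNIV. v $ j * z j) ` F) \<partial>std_gaussian UNIV)"
proof -
  let ?n = "real CARD('n)"
  define h where "h z = Max ((\<lambda>v. \<Sum>j\<in>UNIV. v $ j * z j) ` F)" for z :: "'q \<Rightarrow> real"
  have h [measurable]: "h \<in> borel_measurable (std_gaussian UNIV)"
    unfolding h_def using F by (intro borel_measurable_integrable integrable_Max_image) auto
  let ?S = "\<lambda>w j. (\<Sum>i\<in>UNIV. w ((i, j), False)) / sqrt ?n"
  have row_sum: "(\<Sum>i\<in>UNIV. gauss_row w False i v) = sqrt ?n * (\<Sum>j\<in>UNIV. v $ j * ?S w j)" for w v
  proof -
    have "sqrt ?n * (a * (x / sqrt ?n)) = a * x" for a x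
      by simp
    then have "sqrt ?n * (\<Sum>j\<in>UNIV. v $ j * ?S w j) = (\<Sum>j\<in>UNIV. \<Sum>i\<in>UNIV. v $ j * w ((i, j), False))"
      by (simp only: sum_distrib_left)
    then show ?thesis
      by (simp add: gauss_row_def) (rule sum.swap)
  qed
  have Max_row_sum: "Max ((\<lambda>v. \<Sum>i\<in>UNIV. gauss_row w False i v) ` F) = sqrt ?n * h (?S w)" for w
    unfolding h_def row_sum by (rule Max_image_cmult[OF F]) simp
  have reindex: "(\<integral>w. h (?S w) \<partial>std_gaussian (UNIV :: (('n \<times> 'q) \<times> bool) set))
      = (\<integral>z. h (\<lambda>j. (\<Sum>i\<in>UNIV. z (i, j)) / sqrt ?n) \<partial>std_gaussian (UNIV :: ('n \<times> 'q) set))"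
  proof (rule integral_std_gaussian_reindex[symmetric])
    have "(\<lambda>z j. (\<Sum>i\<in>UNIV. z (i, j)) / sqrt ?n) \<in> measurable (std_gaussian UNIV) (std_gaussian UNIV)"
      by (rule measurable_into_std_gaussian) measurable
    then show "(\<lambda>z. h (\<lambda>j. (\<Sum>i\<in>UNIV. z (i, j)) / sqrt ?n)) \<in> borel_measurable (std_gaussian UNIV)"
      using h by measurable
  qed (auto simp: inj_def)
  have "(\<integral>w. Max ((\<lambda>v. \<Sum>i\<in>UNIV. gauss_row w False i v) ` F) \<partial>std_gaussian (UNIV :: (('n \<times> 'q) \<times> bool) set))
      = sqrt ?n * (\<integral>w. h (?S w) \<partial>std_gaussian (UNIV :: (('n \<times> 'q) \<times> bool) set))"
    by (simp only: Max_row_sum integral_mult_right_zero)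
  also have "\<dots> = sqrt ?n * (\<integral>z. h z \<partial>std_gaussian UNIV)"
    by (simp only: reindex integral_std_gaussian_row_sums[OF h])
  finally show ?thesis
    by (simp only: h_def)
qed

lemma integral_Max_gaussian_deviation_le:
  fixes F :: "(real ^ 'q::finite) set"
  assumes F: "finite F" "F \<noteq> {}"
  shows "(\<integral>w. Max ((\<lambda>v. sqrt (2 / pi) * norm v - (\<Sum>i\<in>UNIV. \<bar>gauss_row w False i v\<bar>) / real CARD('n)) ` F)
            \<partial>std_gaussian (UNIV :: (('n::finite \<times> 'q) \<times> bool) set))
       \<le> 2 / sqrt (real CARD('n)) * (\<integral>z. Max ((\<lambda>v. \<Sum>j\<in>UNIV. v $ j * z j) ` F) \<partial>std_gaussian UNIV)"
proof -
  let ?\<Omega> = "std_gaussian (UNIV :: (('n \<times> 'q) \<times> bool) set)"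
  let ?n = "real CARD('n)" and ?N = "real (card (UNIV :: ('n \<Rightarrow> bool) set))"
  let ?D = "\<integral>w. Max ((\<lambda>v. \<Sum>i\<in>UNIV. \<bar>gauss_row w True i v\<bar> - \<bar>gauss_row w False i v\<bar>) ` F) \<partial>?\<Omega>"
  let ?W = "\<integral>z. Max ((\<lambda>v. \<Sum>j\<in>UNIV. v $ j * z j) ` F) \<partial>std_gaussian UNIV"
  have "?N * ?D \<le> 2 * (\<Sum>s\<in>UNIV. \<integral>w. Max ((\<lambda>v. \<Sum>i\<in>UNIV. rademacher (s i) * \<bar>gauss_row w False i v\<bar>) ` F) \<partial>?\<Omega>)"
    by (rule integral_Max_gauss_row_abs_diff_le[OF F])
  also have "\<dots> \<le> 2 * (?N * (\<integral>w. Max ((\<lambda>v. \<Sum>i\<in>UNIV. gauss_row w False i v) ` F) \<partial>?\<Omega>))"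
    by (intro mult_left_mono sum_integral_Max_rademacher_abs_le[OF F]) simp
  also have "\<dots> = ?N * (2 * sqrt ?n * ?W)"
    by (simp add: integral_Max_gauss_row_sum[OF F])
  finally have "?D \<le> 2 * sqrt ?n * ?W"
    by simp
  then have "?D / ?n \<le> 2 * sqrt ?n * ?W / ?n"
    by (simp add: divide_right_mono)
  also have "2 * sqrt ?n * ?W / ?n = 2 / sqrt ?n * ?W"
    by (simp add: field_simps real_sqrt_mult[symmetric])
  finally show ?thesis
    by (rule order_trans[OF integral_Max_norm_minus_gauss_row_le[OF F]])
qed

lemma (in prob_space) nn_integral_Max_gaussian_deviation_le:
  fixes B :: "'a \<Rightarrow> real ^ 'q::finite ^ 'n::finite" and g :: "'a \<Rightarrow> real ^ 'q"
  assumes B_indep: "indep_vars (\<lambda>_. borel) (\<lambda>(i, j) \<omega>. B \<omega> $ i $ j) UNIV"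
    and B_normal: "\<And>i j. distributed M lborel (\<lambda>\<omega>. B \<omega> $ i $ j) std_normal_density"
    and g_indep: "indep_vars (\<lambda>_. borel) (\<lambda>j \<omega>. g \<omega> $ j) UNIV"
    and g_normal: "\<And>j. distributed M lborel (\<lambda>\<omega>. g \<omega> $ j) std_normal_density"
    and F: "finite F" "0 \<in> F"
  shows "(\<integral>\<^sup>+\<omega>. ennreal (Max ((\<lambda>v. sqrt (2 / pi) * norm v - l1norm (B \<omega> *v v) / real CARD('n)) ` F)) \<partial>M)
       \<le> ennreal (2 / sqrt (real CARD('n))) * (\<integral>\<^sup>+\<omega>. ennreal (Max ((\<lambda>v. g \<omega> \<bullet> v) ` F)) \<partial>M)"
proof -
  let ?n = "real CARD('n)"
  have F_ne: "F \<noteq> {}" using F by auto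
  define G where "G z = Max ((\<lambda>v. sqrt (2 / pi) * norm v - (\<Sum>i\<in>UNIV. \<bar>\<Sum>j\<in>UNIV. v $ j * z (i, j)\<bar>) / ?n) ` F)"
    for z :: "'n \<times> 'q \<Rightarrow> real"
  define h where "h z = Max ((\<lambda>v. \<Sum>j\<in>UNIV. v $ j * z j) ` F)" for z :: "'q \<Rightarrow> real"
  interpret Q: prob_space "std_gaussian (UNIV :: ('n \<times> 'q) set)" by simp
  have G_int: "integrable (std_gaussian UNIV) G"
    unfolding G_def using F
    by (auto intro!: integrable_Max_image integrable_diff integrable_divide Bochner_Integration.integrable_sum
        integrable_abs integrable_mult_right)
  have h_int: "integrable (std_gaussian UNIV) h"
    unfolding h_def using F
    by (auto intro!: integrable_Max_image Bochner_Integration.integrable_sum integrable_mult_right)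
  \<comment> \<open>Both maxima are nonnegative because they include the value at \<open>v = 0\<close>.\<close>
  have G_nonneg: "0 \<le> G z" for z
    unfolding G_def by (rule order_trans[OF _ Max_ge[OF finite_imageI[OF F(1)] imageI[OF F(2)]]]) simp
  have h_nonneg: "0 \<le> h z" for z
    unfolding h_def by (rule order_trans[OF _ Max_ge[OF finite_imageI[OF F(1)] imageI[OF F(2)]]]) simp
  have "(\<integral>\<^sup>+\<omega>. ennreal (Max ((\<lambda>v. sqrt (2 / pi) * norm v - l1norm (B \<omega> *v v) / ?n) ` F)) \<partial>M)
      = (\<integral>\<^sup>+\<omega>. ennreal (G (\<lambda>ij. (\<lambda>(i, j) \<omega>. B \<omega> $ i $ j) ij \<omega>)) \<partial>M)"
    by (simp add: G_def l1norm_def matrix_vector_mult_def mult.commute case_prod_beta)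
  also have "\<dots> = ennreal (\<integral>z. G z \<partial>std_gaussian UNIV)"
    using nn_integral_iid_std_normal[OF B_indep _ borel_measurable_integrable[OF G_int]] B_normal
      nn_integral_eq_integral[OF G_int] G_nonneg by (simp add: split_beta')
  also have "(\<integral>z. G z \<partial>std_gaussian UNIV) = (\<integral>w. G (\<lambda>k. w (k, False)) \<partial>std_gaussian UNIV)"
    by (rule integral_std_gaussian_reindex) (use G_int in \<open>auto simp: inj_def\<close>)
  also have "\<dots> = (\<integral>w. Max ((\<lambda>v. sqrt (2 / pi) * norm v - (\<Sum>i\<in>UNIV. \<bar>gauss_row w False i v\<bar>) / ?n) ` F)
      \<partial>std_gaussian (UNIV :: (('n \<times> 'q) \<times> bool) set))"
    by (simp add: G_def gauss_row_def)
  also have "ennreal \<dots> \<le> ennreal (2 / sqrt ?n * (\<integral>z. h z \<partial>std_gaussian UNIV))"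
    unfolding h_def by (intro ennreal_leI integral_Max_gaussian_deviation_le F F_ne)
  also have "\<dots> = ennreal (2 / sqrt ?n) * (\<integral>\<^sup>+z. ennreal (h z) \<partial>std_gaussian UNIV)"
    by (subst ennreal_mult)
       (auto intro!: Bochner_Integration.integral_nonneg h_nonneg simp: nn_integral_eq_integral[OF h_int] h_nonneg)
  also have "(\<integral>\<^sup>+z. ennreal (h z) \<partial>std_gaussian UNIV) = (\<integral>\<^sup>+\<omega>. ennreal (h (\<lambda>j. g \<omega> $ j)) \<partial>M)"
    by (rule nn_integral_iid_std_normal[OF g_indep g_normal, symmetric]) (use h_int in auto)
  finally show ?thesis
    by (simp add: h_def inner_vec_def mult.commute)
qed

section \<open>From finite maxima to suprema\<close>

lemma countable_dense_subset:
  fixes V :: "'a::{metric_space, second_countable_topology} set"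
  obtains V0 where "countable V0" "V0 \<subseteq> V" "V \<subseteq> closure V0"
proof -
  obtain \<B> :: "'a set set" where \<B>: "countable \<B>" "{} \<notin> \<B>" "\<And>C. C \<in> \<B> \<Longrightarrow> openin (top_of_set V) C"
    "\<And>U. openin (top_of_set V) U \<Longrightarrow> \<exists>\<U>. \<U> \<subseteq> \<B> \<and> U = \<Union>\<U>"
    by (rule subset_second_countable[of V]) blast
  define V0 where "V0 = (\<lambda>C. SOME x. x \<in> C) ` \<B>"
  have pick: "(SOME x. x \<in> C) \<in> C" if "C \<in> \<B>" for C
    using \<B>(2) that by (metis ex_in_conv someI_ex)
  have "V0 \<subseteq> V"
    using pick \<B>(3) by (auto simp: V0_def dest: openin_imp_subset)
  moreover have "v \<in> closure V0" if "v \<in> V" for v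
  proof (rule closure_approachable[THEN iffD2], intro allI impI)
    fix e :: real assume "e > 0"
    have "openin (top_of_set V) (V \<inter> ball v e)"
      by (simp add: openin_open_Int)
    then obtain \<U> where \<U>: "\<U> \<subseteq> \<B>" "V \<inter> ball v e = \<Union>\<U>"
      using \<B>(4) by meson
    moreover have "v \<in> V \<inter> ball v e"
      using \<open>v \<in> V\<close> \<open>e > 0\<close> by simp
    ultimately obtain C where "C \<in> \<U>" "v \<in> C"
      by auto
    with \<U> have C: "C \<in> \<B>" "C \<subseteq> ball v e"
      by auto
    then have "(SOME x. x \<in> C) \<in> V0" "dist (SOME x. x \<in> C) v < e"
      using pick[OF C(1)] by (auto simp: V0_def dist_commute)
    then show "\<exists>y\<in>V0. dist y v < e"
      by blast
  qed
  moreover have "countable V0"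
    unfolding V0_def using \<B>(1) by simp
  ultimately show thesis
    using that by blast
qed

lemma nn_integral_SUP_continuous_le:
  fixes f :: "'a \<Rightarrow> 'b::{metric_space, second_countable_topology} \<Rightarrow> real"
  assumes meas: "\<And>v. v \<in> V \<Longrightarrow> (\<lambda>\<omega>. f \<omega> v) \<in> borel_measurable M"
    and cont: "\<And>\<omega>. continuous_on V (f \<omega>)"
    and finite_bound: "\<And>F. finite F \<Longrightarrow> F \<noteq> {} \<Longrightarrow> F \<subseteq> V \<Longrightarrow> (\<integral>\<^sup>+\<omega>. ennreal (Max (f \<omega> ` F)) \<partial>M) \<le> K"
  obtains S where "S \<in> borel_measurable M" "\<And>\<omega>. (\<Squnion>v\<in>V. ennreal (f \<omega> v)) \<le> S \<omega>" "(\<integral>\<^sup>+\<omega>. S \<omega> \<partial>M) \<le> K"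
proof (cases "V = {}")
  case True
  then show thesis
    by (intro that[of "\<lambda>_. 0"]) (simp_all add: bot_ennreal)
next
  case False
  obtain V0 where V0: "countable V0" "V0 \<subseteq> V" "V \<subseteq> closure V0"
    by (rule countable_dense_subset)
  with False have "V0 \<noteq> {}" by auto
  define e where "e = from_nat_into V0"
  have e: "e n \<in> V0" "v \<in> V0 \<Longrightarrow> \<exists>n. e n = v" for n v
    using \<open>V0 \<noteq> {}\<close> V0(1) from_nat_into from_nat_into_surj unfolding e_def by metis+
  define S where "S \<omega> = (SUP k. ennreal (Max (f \<omega> ` e ` {..k})))" for \<omega>
  have Max_mono: "Max (f \<omega> ` e ` {..k}) \<le> Max (f \<omega> ` e ` {..l})" if "k \<le> l" for \<omega> k l
    using that by (intro Max_mono image_mono) auto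
  have "S \<in> borel_measurable M"
    unfolding S_def using e(1) V0(2)
    by (intro borel_measurable_SUP measurable_compose[OF _ measurable_ennreal] borel_measurable_Max meas) auto
  moreover have "(\<Squnion>v\<in>V. ennreal (f \<omega> v)) \<le> S \<omega>" for \<omega>
  proof (rule SUP_least)
    fix v assume "v \<in> V"
    \<comment> \<open>Approximate \<open>v\<close> by points of the dense set and use continuity of \<open>f \<omega>\<close>.\<close>
    then obtain x where x: "\<And>m. x m \<in> V0" "x \<longlonglongrightarrow> v"
      using V0(3) closure_sequential by blast
    then have "(\<lambda>m. f \<omega> (x m)) \<longlonglongrightarrow> f \<omega> v"
      using cont[of \<omega>] \<open>v \<in> V\<close> V0(2) unfolding continuous_on_sequentially comp_def by blast
    moreover have "ennreal (f \<omega> (x m)) \<le> S \<omega>" for m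
    proof -
      obtain n where n: "x m = e n" using e(2) x(1) by metis
      have "f \<omega> (x m) \<le> Max (f \<omega> ` e ` {..n})"
        unfolding n by (intro Max_ge) auto
      also have "ennreal \<dots> \<le> S \<omega>"
        unfolding S_def by (rule SUP_upper) simp
      finally show ?thesis by (simp add: ennreal_leI)
    qed
    ultimately show "ennreal (f \<omega> v) \<le> S \<omega>"
      by (intro LIMSEQ_le_const2[OF tendsto_ennrealI]) auto
  qed
  moreover have "(\<integral>\<^sup>+\<omega>. S \<omega> \<partial>M) \<le> K"
  proof -
    have "(\<integral>\<^sup>+\<omega>. S \<omega> \<partial>M) = (SUP k. \<integral>\<^sup>+\<omega>. ennreal (Max (f \<omega> ` e ` {..k})) \<partial>M)"
      unfolding S_def using e(1) V0(2) Max_mono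
      by (intro nn_integral_monotone_convergence_SUP incseq_SucI le_funI ennreal_leI
          measurable_compose[OF _ measurable_ennreal] borel_measurable_Max meas) auto
    also have "\<dots> \<le> K"
      using e(1) V0(2) by (intro SUP_least finite_bound) auto
    finally show ?thesis .
  qed
  ultimately show thesis
    by (rule that)
qed

lemma sqrt_quadratic_form_eq_norm:
  fixes C :: "real ^ 'p ^ 'q" and u :: "real ^ 'p"
  shows "sqrt (u \<bullet> ((transpose C ** C) *v u)) = norm (C *v u)"
proof -
  have "u \<bullet> ((transpose C ** C) *v u) = (C *v u) \<bullet> (C *v u)"
    by (metis dot_lmul_matrix matrix_vector_mul_assoc vector_transpose_matrix)
  then show ?thesis
    by (simp add: norm_eq_sqrt_inner)
qed

lemma SUP_sqrt_quadratic_form_le: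
  fixes B :: "real ^ 'q ^ 'n::finite" and C :: "real ^ 'p ^ 'q"
  shows "(\<Squnion>u\<in>{u \<in> T. l1norm ((B ** C) *v u) / real CARD('n) \<le> \<epsilon>}. ennreal (sqrt (u \<bullet> ((transpose C ** C) *v u))))
     \<le> ennreal (sqrt (pi / 2) * \<epsilon>) + ennreal (sqrt (pi / 2)) *
         (\<Squnion>v\<in>(\<lambda>u. C *v u) ` T. ennreal (sqrt (2 / pi) * norm v - l1norm (B *v v) / real CARD('n)))"
proof (rule SUP_least)
  let ?k = "sqrt (pi / 2)" and ?n = "real CARD('n)"
  fix u assume u: "u \<in> {u \<in> T. l1norm ((B ** C) *v u) / ?n \<le> \<epsilon>}"
  define v where "v = C *v u"
  define d where "d = sqrt (2 / pi) * norm v - l1norm (B *v v) / ?n"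
  have l1: "0 \<le> l1norm (B *v v) / ?n" "l1norm (B *v v) / ?n \<le> \<epsilon>"
    using u by (auto simp: l1norm_def v_def matrix_vector_mul_assoc intro!: sum_nonneg)
  \<comment> \<open>\<open>norm v = ?k * (d + l1norm (B *v v) / ?n)\<close>, since \<open>?k * sqrt (2 / pi) = 1\<close>.\<close>
  have "norm v = ?k * d + ?k * (l1norm (B *v v) / ?n)"
    by (simp add: d_def algebra_simps real_sqrt_mult[symmetric])
  also have "\<dots> \<le> ?k * max 0 d + ?k * \<epsilon>"
    using l1 by (intro add_mono mult_left_mono) auto
  finally have "ennreal (sqrt (u \<bullet> ((transpose C ** C) *v u))) \<le> ennreal (?k * max 0 d + ?k * \<epsilon>)"
    by (simp add: sqrt_quadratic_form_eq_norm v_def[symmetric] ennreal_leI)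
  also have "\<dots> = ennreal (?k * \<epsilon>) + ennreal ?k * ennreal d"
    using l1 by (simp add: ennreal_plus ennreal_mult add.commute max_def ennreal_neg)
  also have "ennreal d \<le> (\<Squnion>v\<in>(\<lambda>u. C *v u) ` T. ennreal (sqrt (2 / pi) * norm v - l1norm (B *v v) / ?n))"
    unfolding d_def v_def using u by (intro SUP_upper) auto
  finally show "ennreal (sqrt (u \<bullet> ((transpose C ** C) *v u))) \<le> ennreal (?k * \<epsilon>) + ennreal ?k *
      (\<Squnion>v\<in>(\<lambda>u. C *v u) ` T. ennreal (sqrt (2 / pi) * norm v - l1norm (B *v v) / ?n))"
    by (simp add: add_left_mono mult_left_mono)
qed

lemma (in prob_space) nn_integral_Max_gaussian_deviation_le_SUP:
  fixes B :: "'a \<Rightarrow> real ^ 'q::finite ^ 'n::finite" and g :: "'a \<Rightarrow> real ^ 'q" and C :: "real ^ 'p ^ 'q"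
  assumes "indep_vars (\<lambda>_. borel) (\<lambda>(i, j) \<omega>. B \<omega> $ i $ j) UNIV"
    and "\<And>i j. distributed M lborel (\<lambda>\<omega>. B \<omega> $ i $ j) std_normal_density"
    and "indep_vars (\<lambda>_. borel) (\<lambda>j \<omega>. g \<omega> $ j) UNIV"
    and "\<And>j. distributed M lborel (\<lambda>\<omega>. g \<omega> $ j) std_normal_density"
    and F: "finite F" "F \<noteq> {}" "F \<subseteq> (\<lambda>u. C *v u) ` T"
  shows "(\<integral>\<^sup>+\<omega>. ennreal (Max ((\<lambda>v. sqrt (2 / pi) * norm v - l1norm (B \<omega> *v v) / real CARD('n)) ` F)) \<partial>M)
       \<le> ennreal (2 / sqrt (real CARD('n))) * (\<integral>\<^sup>+\<omega>. (\<Squnion>u\<in>T. ennreal \<bar>(transpose C *v g \<omega>) \<bullet> u\<bar>) \<partial>M)"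
proof -
  let ?D = "\<lambda>\<omega> v. sqrt (2 / pi) * norm v - l1norm (B \<omega> *v v) / real CARD('n)"
  have "(\<integral>\<^sup>+\<omega>. ennreal (Max (?D \<omega> ` F)) \<partial>M) \<le> (\<integral>\<^sup>+\<omega>. ennreal (Max (?D \<omega> ` insert 0 F)) \<partial>M)"
    using F by (intro nn_integral_mono ennreal_leI Max_mono) auto
  also have "\<dots> \<le> ennreal (2 / sqrt (real CARD('n))) * (\<integral>\<^sup>+\<omega>. ennreal (Max ((\<lambda>v. g \<omega> \<bullet> v) ` insert 0 F)) \<partial>M)"
    using assms by (intro nn_integral_Max_gaussian_deviation_le) auto
  also have "\<dots> \<le> ennreal (2 / sqrt (real CARD('n))) * (\<integral>\<^sup>+\<omega>. (\<Squnion>u\<in>T. ennreal \<bar>(transpose C *v g \<omega>) \<bullet> u\<bar>) \<partial>M)"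
  proof (intro mult_left_mono nn_integral_mono)
    fix \<omega>
    have "Max ((\<lambda>v. g \<omega> \<bullet> v) ` insert 0 F) \<in> (\<lambda>v. g \<omega> \<bullet> v) ` insert 0 F"
      using F(1) by (intro Max_in) auto
    then obtain v where v: "v \<in> insert 0 F" "Max ((\<lambda>v. g \<omega> \<bullet> v) ` insert 0 F) = g \<omega> \<bullet> v"
      by blast
    have "ennreal (g \<omega> \<bullet> v) \<le> (\<Squnion>u\<in>T. ennreal \<bar>(transpose C *v g \<omega>) \<bullet> u\<bar>)"
    proof (cases "v = 0")
      case False
      with v F(3) obtain u where "u \<in> T" "v = C *v u" by auto
      then have "ennreal (g \<omega> \<bullet> v) \<le> ennreal \<bar>(transpose C *v g \<omega>) \<bullet> u\<bar>"
        by (intro ennreal_leI) (simp add: dot_lmul_matrix vector_transpose_matrix)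
      also have "\<dots> \<le> (\<Squnion>u\<in>T. ennreal \<bar>(transpose C *v g \<omega>) \<bullet> u\<bar>)"
        using \<open>u \<in> T\<close> by (rule SUP_upper)
      finally show ?thesis .
    qed simp
    then show "ennreal (Max ((\<lambda>v. g \<omega> \<bullet> v) ` insert 0 F)) \<le> (\<Squnion>u\<in>T. ennreal \<bar>(transpose C *v g \<omega>) \<bullet> u\<bar>)"
      by (simp only: v(2))
  qed simp
  finally show ?thesis .
qed

lemma (in prob_space) gaussian_deviation_SUP_majorant:
  fixes B :: "'a \<Rightarrow> real ^ 'q::finite ^ 'n::finite" and g :: "'a \<Rightarrow> real ^ 'q" and C :: "real ^ 'p ^ 'q"
  assumes B_indep: "indep_vars (\<lambda>_. borel) (\<lambda>(i, j) \<omega>. B \<omega> $ i $ j) UNIV"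
    and B_normal: "\<And>i j. distributed M lborel (\<lambda>\<omega>. B \<omega> $ i $ j) std_normal_density"
    and g_indep: "indep_vars (\<lambda>_. borel) (\<lambda>j \<omega>. g \<omega> $ j) UNIV"
    and g_normal: "\<And>j. distributed M lborel (\<lambda>\<omega>. g \<omega> $ j) std_normal_density"
  obtains S where "S \<in> borel_measurable M"
    "\<And>\<omega>. (\<Squnion>v\<in>(\<lambda>u. C *v u) ` T. ennreal (sqrt (2 / pi) * norm v - l1norm (B \<omega> *v v) / real CARD('n))) \<le> S \<omega>"
    "(\<integral>\<^sup>+\<omega>. S \<omega> \<partial>M)
       \<le> ennreal (2 / sqrt (real CARD('n))) * (\<integral>\<^sup>+\<omega>. (\<Squnion>u\<in>T. ennreal \<bar>(transpose C *v g \<omega>) \<bullet> u\<bar>) \<partial>M)"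
proof -
  let ?D = "\<lambda>\<omega> v. sqrt (2 / pi) * norm v - l1norm (B \<omega> *v v) / real CARD('n)"
  have [measurable]: "(\<lambda>\<omega>. B \<omega> $ i $ j) \<in> borel_measurable M" for i j
    using B_normal[of i j] by (simp add: distributed_def)
  have meas: "(\<lambda>\<omega>. ?D \<omega> v) \<in> borel_measurable M" for v
    unfolding l1norm_def matrix_vector_mult_def vec_lambda_beta by measurable
  have cont: "continuous_on ((\<lambda>u. C *v u) ` T) (?D \<omega>)" for \<omega>
    unfolding l1norm_def matrix_vector_mult_def vec_lambda_beta by (intro continuous_intros) simp
  have bound: "(\<integral>\<^sup>+\<omega>. ennreal (Max (?D \<omega> ` F)) \<partial>M)
      \<le> ennreal (2 / sqrt (real CARD('n))) * (\<integral>\<^sup>+\<omega>. (\<Squnion>u\<in>T. ennreal \<bar>(transpose C *v g \<omega>) \<bullet> u\<bar>) \<partial>M)"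
    if "finite F" "F \<noteq> {}" "F \<subseteq> (\<lambda>u. C *v u) ` T" for F
    using nn_integral_Max_gaussian_deviation_le_SUP[OF assms that] .
  show thesis
    by (rule nn_integral_SUP_continuous_le[OF meas cont bound that])
qed

theorem theorem5:
  fixes M :: "'a measure"
    and B :: "'a \<Rightarrow> real ^ 'q ^ 'n"
    and g :: "'a \<Rightarrow> real ^ 'q"
    and C :: "real ^ 'p ^ 'q"
    and T :: "(real ^ 'p) set"
    and \<epsilon> :: real
  assumes "prob_space M"
    and "bounded T"
    and "\<epsilon> \<ge> 0"
    and B_indep: "prob_space.indep_vars M (\<lambda>_. borel) (\<lambda>(i, j) \<omega>. B \<omega> $ i $ j) UNIV"
    and B_normal: "\<And>i j. distributed M lborel (\<lambda>\<omega>. B \<omega> $ i $ j) std_normal_density"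
    and g_indep: "prob_space.indep_vars M (\<lambda>_. borel) (\<lambda>j \<omega>. g \<omega> $ j) UNIV"
    and g_normal: "\<And>j. distributed M lborel (\<lambda>\<omega>. g \<omega> $ j) std_normal_density"
  shows "(\<integral>\<^sup>+ \<omega>. (\<Squnion>u\<in>{u \<in> T. l1norm ((B \<omega> ** C) *v u) / real CARD('n) \<le> \<epsilon>}.
              ennreal (sqrt (u \<bullet> ((transpose C ** C) *v u)))) \<partial>M)
         \<le> ennreal (sqrt (2 * pi / real CARD('n))) *
             (\<integral>\<^sup>+ \<omega>. (\<Squnion>u\<in>T. ennreal \<bar>(transpose C *v g \<omega>) \<bullet> u\<bar>) \<partial>M)
           + ennreal (sqrt (pi / 2) * \<epsilon>)"
proof -
  interpret prob_space M by fact
  let ?n = "real CARD('n)" and ?k = "sqrt (pi / 2)"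
  let ?R = "\<integral>\<^sup>+ \<omega>. (\<Squnion>u\<in>T. ennreal \<bar>(transpose C *v g \<omega>) \<bullet> u\<bar>) \<partial>M"
  obtain S where S: "S \<in> borel_measurable M"
      "\<And>\<omega>. (\<Squnion>v\<in>(\<lambda>u. C *v u) ` T. ennreal (sqrt (2 / pi) * norm v - l1norm (B \<omega> *v v) / ?n)) \<le> S \<omega>"
      "(\<integral>\<^sup>+\<omega>. S \<omega> \<partial>M) \<le> ennreal (2 / sqrt ?n) * ?R"
    using gaussian_deviation_SUP_majorant[OF B_indep B_normal g_indep g_normal, where C=C and T=T] by blast
  have k: "ennreal ?k * ennreal (2 / sqrt ?n) = ennreal (sqrt (2 * pi / ?n))"
    by (simp add: ennreal_mult[symmetric] real_sqrt_divide real_sqrt_mult field_simps)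
  have "(\<integral>\<^sup>+ \<omega>. (\<Squnion>u\<in>{u \<in> T. l1norm ((B \<omega> ** C) *v u) / ?n \<le> \<epsilon>}. ennreal (sqrt (u \<bullet> ((transpose C ** C) *v u)))) \<partial>M)
      \<le> (\<integral>\<^sup>+\<omega>. ennreal (?k * \<epsilon>) + ennreal ?k * S \<omega> \<partial>M)"
    by (intro nn_integral_mono order_trans[OF SUP_sqrt_quadratic_form_le] add_left_mono mult_left_mono S(2)) simp
  also have "\<dots> = ennreal (?k * \<epsilon>) + ennreal ?k * (\<integral>\<^sup>+\<omega>. S \<omega> \<partial>M)"
    using S(1) by (simp add: nn_integral_add nn_integral_cmult emeasure_space_1)
  also have "\<dots> \<le> ennreal (?k * \<epsilon>) + ennreal ?k * (ennreal (2 / sqrt ?n) * ?R)"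
    by (intro add_left_mono mult_left_mono S(3)) simp
  also have "\<dots> = ennreal (?k * \<epsilon>) + ennreal (sqrt (2 * pi / ?n)) * ?R"
    by (simp only: k mult.assoc[symmetric])
  finally show ?thesis
    by (simp add: add.commute)
qed

end
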